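(* Let $D$ be an integral domain, $T$ an overring of $D$, $\star$ a semistar operation on $D$ and $\star'$ a semistar operation on $T$. The following are equivalent: (i) $T$ is $(\star,\star')$-flat over $D$; (ii) $T$ is $(\star,\star')$-linked to $D$ and, for each nonzero prime ideal $P$ of $D$, either $(PT)^{\star'_f}=T^{\star'}$ or $T\subseteq D_P$; (iii) $T$ is $(\star,\star')$-linked to $D$ and, for each nonzero $x\in T$, $((D:_DxD)T)^{\star'_f}=T^{\star'}$, where $(D:_DxD)=\{d\in D: dx\in D\}$; (iv) $T$ is $(\star,\star')$-linked to $D$ and $T^{\widetilde{\star'}}=\bigcap\{D_{Q\cap D}: Q\in\mathcal M(\star'_f)\}$; (v) $T$ is $(\star,\star')$-linked to $D$ and there exists a multiplicative system $\Sigma$ of nonzero ideals of $D$ such that $T^{\widetilde{\star'}}=D^{\tilde\star}_{\Sigma^{\tilde\star}}$ and $(IT)^{\star'_f}=T^{\star'}$ for every $I\in\Sigma$. Moreover, each of (i)–(v) follows from: (vi) $T$ is $(\star,\star')$-linked to $D$ and, for each quasi-$\star_f$-prime ideal $P$ of $D$, $T_{D\setminus P}$ is flat over $D_P$.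
   Context: Let $D$ be an integral domain with quotient field $K$. $\overline{\mathbf F}(D)$ denotes the set of all nonzero $D$-submodules of $K$ and $\mathbf f(D)$ the set of nonzero finitely generated $D$-submodules of $K$. A semistar operation on $D$ is a map $\star:\overline{\mathbf F}(D)\to\overline{\mathbf F}(D)$, $E\mapsto E^\star$, such that for all $0\ne x\in K$ and $E,F\in\overline{\mathbf F}(D)$: (1) $(xE)^\star=xE^\star$; (2) $E\subseteq F\Rightarrow E^\star\subseteq F^\star$; (3) $E\subseteq E^\star$ and $(E^\star)^\star=E^\star$. $\star_f$ is defined by $E^{\star_f}=\bigcup\{F^\star:F\in\mathbf f(D),F\subseteq E\}$. A nonzero ideal $I$ of $D$ is a quasi-$\star$-ideal if $I^\star\cap D=I$; a quasi-$\star$-prime is a prime quasi-$\star$-ideal; a quasi-$\star$-maximal ideal is a maximal element among proper quasi-$\star$-ideals; $\mathcal M(\star_f)$ is the set of quasi-$\star_f$-maximal ideals of $D$ and $E^{\tilde\star}=\bigcap\{ED_Q:Q\in\mathcal M(\star_f)\}$ (equal to $K$ if $\mathcal M(\star_f)=\emptyset$). An overring of $D$ is a ring $T$ with $D\subseteq T\subseteq K$; all notions are defined analogously on $T$ (so $\mathcal M(\star'_f)$ and $\widetilde{\star'}$ refer to $T$). $T$ is $(\star,\star')$-linked to $D$ if for every nonzero finitely generated ideal $F\subseteq D$ with $F^\star=D^\star$ one has $(FT)^{\star'}=T^{\star'}$. $T$ is $(\star,\star')$-flat over $D$ if $T$ is $(\star,\star')$-linked to $D$ and $D_{Q\cap D}=T_Q$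 for every quasi-$\star'_f$-prime ideal $Q$ of $T$. A multiplicative system of ideals of $D$ is a nonempty set $\Sigma$ of nonzero ideals closed under products; $\Sigma^{\tilde\star}=\{I^{\tilde\star}:I\in\Sigma\}$ and $D^{\tilde\star}_{\Sigma^{\tilde\star}}:=\{z\in K: zI^{\tilde\star}\subseteq D^{\tilde\star}$ for some $I\in\Sigma\}$. *)

theory Defs
  imports Main
begin

text \<open>Convention: the quotient field K of the domain D is the whole type 'k (a field).
  Subsets of 'k are D-submodules of K; D itself is a subring of 'k whose fraction field is 'k.\<close>

definition subring :: "'k::field set \<Rightarrow> bool" where
  "subring R \<longleftrightarrow> 0 \<in> R \<and> 1 \<in> R \<and> (\<forall>a\<in>R. \<forall>b\<in>R. a + b \<in> R \<and> a - b \<in> R \<and> a * b \<in> R)"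

definition domain_with_qf :: "'k::field set \<Rightarrow> bool" where
  "domain_with_qf D \<longleftrightarrow> subring D \<and> (\<forall>z. \<exists>a\<in>D. \<exists>b\<in>D. b \<noteq> 0 \<and> z = a / b)"

definition overring :: "'k::field set \<Rightarrow> 'k set \<Rightarrow> bool" where
  "overring D T \<longleftrightarrow> subring T \<and> D \<subseteq> T"

definition submod :: "'k::field set \<Rightarrow> 'k set \<Rightarrow> bool" where
  "submod D E \<longleftrightarrow> 0 \<in> E \<and> (\<forall>x\<in>E. \<forall>y\<in>E. x + y \<in> E) \<and> (\<forall>d\<in>D. \<forall>x\<in>E. d * x \<in> E)"

definition Fbar :: "'k::field set \<Rightarrow> 'k set set" where
  "Fbar D = {E. submod D E \<and> E \<noteq> {0}}"

definition gen_mod :: "'k::field set \<Rightarrow> 'k set \<Rightarrow> 'k set" where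
  "gen_mod D S = {\<Sum>i<n. a i * s i | (n::nat) a s. \<forall>i<n. a i \<in> D \<and> s i \<in> S}"

definition ffg :: "'k::field set \<Rightarrow> 'k set set" where
  "ffg D = {E \<in> Fbar D. \<exists>S. finite S \<and> E = gen_mod D S}"

definition smult :: "'k::field set \<Rightarrow> 'k set \<Rightarrow> 'k set" where
  "smult A B = {\<Sum>i<n. a i * b i | (n::nat) a b. \<forall>i<n. a i \<in> A \<and> b i \<in> B}"

definition semistar :: "'k::field set \<Rightarrow> ('k set \<Rightarrow> 'k set) \<Rightarrow> bool" where
  "semistar D st \<longleftrightarrow>
     (\<forall>E\<in>Fbar D. st E \<in> Fbar D) \<and>
     (\<forall>x E. x \<noteq> 0 \<longrightarrow> E \<in> Fbar D \<longrightarrow> st ((\<lambda>e. x * e) ` E) = (\<lambda>e. x * e) ` st E) \<and>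
     (\<forall>E\<in>Fbar D. \<forall>F\<in>Fbar D. E \<subseteq> F \<longrightarrow> st E \<subseteq> st F) \<and>
     (\<forall>E\<in>Fbar D. E \<subseteq> st E \<and> st (st E) = st E)"

definition star_f :: "'k::field set \<Rightarrow> ('k set \<Rightarrow> 'k set) \<Rightarrow> 'k set \<Rightarrow> 'k set" where
  "star_f D st E = \<Union>{st F | F. F \<in> ffg D \<and> F \<subseteq> E}"

definition ideal_of :: "'k::field set \<Rightarrow> 'k set \<Rightarrow> bool" where
  "ideal_of D I \<longleftrightarrow> I \<subseteq> D \<and> submod D I"

definition prime_ideal_of :: "'k::field set \<Rightarrow> 'k set \<Rightarrow> bool" where
  "prime_ideal_of D P \<longleftrightarrow> ideal_of D P \<and> P \<noteq> D \<and>
     (\<forall>a\<in>D. \<forall>b\<in>D. a * b \<in> P \<longrightarrow> a \<in> P \<or> b \<in> P)"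

definition quasi_ideal :: "'k::field set \<Rightarrow> ('k set \<Rightarrow> 'k set) \<Rightarrow> 'k set \<Rightarrow> bool" where
  "quasi_ideal D st I \<longleftrightarrow> ideal_of D I \<and> I \<noteq> {0} \<and> st I \<inter> D = I"

definition quasi_prime :: "'k::field set \<Rightarrow> ('k set \<Rightarrow> 'k set) \<Rightarrow> 'k set \<Rightarrow> bool" where
  "quasi_prime D st P \<longleftrightarrow> quasi_ideal D st P \<and> prime_ideal_of D P"

definition quasi_max :: "'k::field set \<Rightarrow> ('k set \<Rightarrow> 'k set) \<Rightarrow> 'k set \<Rightarrow> bool" where
  "quasi_max D st Q \<longleftrightarrow> quasi_ideal D st Q \<and> Q \<noteq> D \<and>
     (\<forall>J. quasi_ideal D st J \<and> J \<noteq> D \<and> Q \<subseteq> J \<longrightarrow> J = Q)"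

definition Mf :: "'k::field set \<Rightarrow> ('k set \<Rightarrow> 'k set) \<Rightarrow> 'k set set" where
  "Mf D st = {Q. quasi_max D (star_f D st) Q}"

text \<open>fractions R_S = {a/s : a \<in> R, s \<in> S}; D_P = loc D (D - P)\<close>
definition loc :: "'k::field set \<Rightarrow> 'k set \<Rightarrow> 'k set" where
  "loc R S = {a / s | a s. a \<in> R \<and> s \<in> S}"

text \<open>E^{st~} = \<Inter>{E D_Q : Q \<in> M(st_f)}; equals K = UNIV when M(st_f) is empty\<close>
definition tilde :: "'k::field set \<Rightarrow> ('k set \<Rightarrow> 'k set) \<Rightarrow> 'k set \<Rightarrow> 'k set" where
  "tilde D st E = \<Inter>{smult E (loc D (D - Q)) | Q. Q \<in> Mf D st}"

definition linked :: "'k::field set \<Rightarrow> 'k set \<Rightarrow> ('k set \<Rightarrow> 'k set) \<Rightarrow> ('k set \<Rightarrow> 'k set) \<Rightarrow> bool" where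
  "linked D T st st' \<longleftrightarrow>
     (\<forall>F. F \<in> ffg D \<and> F \<subseteq> D \<and> st F = st D \<longrightarrow> st' (smult F T) = st' T)"

definition star_flat :: "'k::field set \<Rightarrow> 'k set \<Rightarrow> ('k set \<Rightarrow> 'k set) \<Rightarrow> ('k set \<Rightarrow> 'k set) \<Rightarrow> bool" where
  "star_flat D T st st' \<longleftrightarrow> linked D T st st' \<and>
     (\<forall>Q. quasi_prime T (star_f T st') Q \<longrightarrow> loc D (D - (Q \<inter> D)) = loc T (T - Q))"

definition mult_system :: "'k::field set \<Rightarrow> 'k set set \<Rightarrow> bool" where
  "mult_system D \<Sigma> \<longleftrightarrow> \<Sigma> \<noteq> {} \<and> (\<forall>I\<in>\<Sigma>. ideal_of D I \<and> I \<noteq> {0}) \<and>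
     (\<forall>I\<in>\<Sigma>. \<forall>J\<in>\<Sigma>. smult I J \<in> \<Sigma>)"

text \<open>D^{st~}_{\<Sigma>^{st~}} = {z : z I^{st~} \<subseteq> D^{st~} for some I \<in> \<Sigma>}\<close>
definition gen_loc :: "'k::field set \<Rightarrow> ('k set \<Rightarrow> 'k set) \<Rightarrow> 'k set set \<Rightarrow> 'k set" where
  "gen_loc D st \<Sigma> = {z. \<exists>I\<in>\<Sigma>. (\<lambda>e. z * e) ` tilde D st I \<subseteq> tilde D st D}"

text \<open>Flatness of an A-submodule M of K over a subring A, via the equational criterion
  (every linear relation in M is a consequence of relations in A).\<close>
definition flat_over :: "'k::field set \<Rightarrow> 'k set \<Rightarrow> bool" where
  "flat_over A M \<longleftrightarrow>
     (\<forall>n (a::nat \<Rightarrow> 'k) m. (\<forall>i<n. a i \<in> A \<and> m i \<in> M) \<and> (\<Sum>i<n. a i * m i) = 0 \<longrightarrow>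
        (\<exists>k (b::nat \<Rightarrow> nat \<Rightarrow> 'k) y. (\<forall>j<k. y j \<in> M) \<and> (\<forall>i<n. \<forall>j<k. b i j \<in> A) \<and>
           (\<forall>i<n. m i = (\<Sum>j<k. b i j * y j)) \<and> (\<forall>j<k. (\<Sum>i<n. a i * b i j) = 0)))"

end

theory Submission
  imports Defs
begin

text \<open>
  Given that T is (st, st')-linked to D, each of (i)--(v) is equivalent to a single condition,
  T \<subseteq> D_{Q \<inter> D} for every quasi-st'_f-maximal ideal Q of T, and (vi) implies it.

  Quasi-st'_f-maximal ideals are prime, and by Zorn's lemma every nonzero ideal I with
  1 \<notin> I^{st'_f} lies in one; hence (IT)^{st'_f} = T^{st'} iff I lies in no member of
  M(st'_f). This translates the extension conditions in (ii), (iii) and (v), together with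
  the remark that x \<in> D_P iff the conductor (D :_D xD) is not contained in P.
  If T \<subseteq> D_{Q \<inter> D} then D_{Q \<inter> D} = T_Q, which gives (i), and (iv) because
  T^{~st'} is the intersection of the T_Q. Linkedness serves only to put Q \<inter> D inside a
  quasi-st_f-maximal ideal M of D: for (v) through D^{~st} \<subseteq> D_M, and for (vi), where
  flatness of T_{D-M} over D_M, applied to the relation y t - x 1 = 0 with t = x/y, yields
  a denominator of t outside Q.
\<close>

section \<open>Submodules and their products\<close>

lemma subring_zero: "subring R \<Longrightarrow> 0 \<in> R"
  and subring_one: "subring R \<Longrightarrow> 1 \<in> R"
  and subring_add: "subring R \<Longrightarrow> a \<in> R \<Longrightarrow> b \<in> R \<Longrightarrow> a + b \<in> R"
  and subring_mult: "subring R \<Longrightarrow> a \<in> R \<Longrightarrow> b \<in> R \<Longrightarrow> a * b \<in> R"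
  by (simp_all add: subring_def)

lemma subring_uminus: "subring R \<Longrightarrow> a \<in> R \<Longrightarrow> - a \<in> R"
  using subring_def[of R] by (metis diff_0)

lemma submod_zero: "submod R E \<Longrightarrow> 0 \<in> E"
  and submod_add: "submod R E \<Longrightarrow> x \<in> E \<Longrightarrow> y \<in> E \<Longrightarrow> x + y \<in> E"
  and submod_scale: "submod R E \<Longrightarrow> r \<in> R \<Longrightarrow> x \<in> E \<Longrightarrow> r * x \<in> E"
  by (simp_all add: submod_def)

lemma submod_sum: "submod R E \<Longrightarrow> \<forall>i<(n::nat). f i \<in> E \<Longrightarrow> (\<Sum>i<n. f i) \<in> E"
  by (induction n) (auto simp: submod_def)

lemma submod_subset_ring: "submod T E \<Longrightarrow> D \<subseteq> T \<Longrightarrow> submod D E"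
  unfolding submod_def by blast

lemma submod_Int: "submod R A \<Longrightarrow> submod R B \<Longrightarrow> submod R (A \<inter> B)"
  by (simp add: submod_def)

lemma subring_submod: "subring R \<Longrightarrow> submod R R"
  by (simp add: subring_def submod_def)

lemma ideal_ofD: "ideal_of R I \<Longrightarrow> I \<subseteq> R" "ideal_of R I \<Longrightarrow> submod R I"
  by (simp_all add: ideal_of_def)

lemma ideal_eq_if_one_mem:
  assumes "ideal_of R I" "1 \<in> I" shows "I = R"
  using assms submod_scale[of R I _ 1] by (auto simp: ideal_of_def)

lemma ideal_nonzeroE:
  assumes "ideal_of R I" "I \<noteq> {0}" obtains x where "x \<in> I" "x \<noteq> 0"
  using assms submod_zero[OF ideal_ofD(2)[OF assms(1)]] by blast

lemma one_notin_prime_ideal: "prime_ideal_of R P \<Longrightarrow> 1 \<notin> P"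
  using ideal_eq_if_one_mem by (auto simp: prime_ideal_of_def)

lemma prime_ideal_mult_notin:
  "prime_ideal_of R P \<Longrightarrow> a \<in> R \<Longrightarrow> b \<in> R \<Longrightarrow> a \<notin> P \<Longrightarrow> b \<notin> P \<Longrightarrow> a * b \<notin> P"
  by (auto simp: prime_ideal_of_def)

lemma sum_lessThan_append:
  "(\<Sum>i<n + (m::nat). if i < n then f i else g (i - n)) = (\<Sum>i<n. f i) + (\<Sum>i<m. (g i :: 'a::comm_monoid_add))"
  by (induction m) (simp_all add: add.assoc)

lemma smultI: "\<forall>i<(n::nat). a i \<in> A \<and> b i \<in> B \<Longrightarrow> x = (\<Sum>i<n. a i * b i) \<Longrightarrow> x \<in> smult A B"
  unfolding smult_def by blast

lemma smultE:
  assumes "x \<in> smult A B"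
  obtains n :: nat and a b where "\<forall>i<n. a i \<in> A \<and> b i \<in> B" "x = (\<Sum>i<n. a i * b i)"
  using assms unfolding smult_def by blast

lemma smult_commute_subset: "smult A B \<subseteq> smult B A"
proof
  fix x assume "x \<in> smult A B"
  then obtain n :: nat and a b where "\<forall>i<n. a i \<in> A \<and> b i \<in> B" "x = (\<Sum>i<n. a i * b i)"
    by (rule smultE)
  then show "x \<in> smult B A" by (intro smultI[of n b _ a]) (auto simp: mult.commute)
qed

lemma smult_commute: "smult A B = smult B A"
  using smult_commute_subset by blast

lemma mult_mem_smult: "a \<in> A \<Longrightarrow> b \<in> B \<Longrightarrow> a * b \<in> smult A B"
  by (rule smultI[of 1 "\<lambda>_. a" A "\<lambda>_. b"]) auto

lemma subset_smult: "1 \<in> B \<Longrightarrow> A \<subseteq> smult A B"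
  using mult_mem_smult[of _ A 1 B] by auto

lemma smult_subset: "submod R E \<Longrightarrow> \<forall>a\<in>A. \<forall>b\<in>B. a * b \<in> E \<Longrightarrow> smult A B \<subseteq> E"
  by (auto elim!: smultE intro!: submod_sum)

lemma submod_smult:
  assumes B: "\<forall>r\<in>R. \<forall>b\<in>B. r * b \<in> B"
  shows "submod R (smult A B)"
  unfolding submod_def
proof (intro conjI ballI)
  show "0 \<in> smult A B" by (rule smultI[of 0]) auto
next
  fix x y assume "x \<in> smult A B" "y \<in> smult A B"
  obtain n :: nat and a b where x: "\<forall>i<n. a i \<in> A \<and> b i \<in> B" "x = (\<Sum>i<n. a i * b i)"
    using \<open>x \<in> smult A B\<close> by (rule smultE)
  obtain m :: nat and a' b' where y: "\<forall>i<m. a' i \<in> A \<and> b' i \<in> B" "y = (\<Sum>i<m. a' i * b' i)"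
    using \<open>y \<in> smult A B\<close> by (rule smultE)
  let ?c = "\<lambda>i. if i < n then a i else a' (i - n)" and ?d = "\<lambda>i. if i < n then b i else b' (i - n)"
  have "x + y = (\<Sum>i<n + m. ?c i * ?d i)"
    using sum_lessThan_append[where n=n and m=m and f="\<lambda>i. a i * b i" and g="\<lambda>i. a' i * b' i"]
    by (simp add: x(2) y(2) if_distrib if_distribR cong: if_cong)
  moreover have "\<forall>i<n + m. ?c i \<in> A \<and> ?d i \<in> B" using x(1) y(1) by auto
  ultimately show "x + y \<in> smult A B" by (intro smultI) auto
next
  fix r x assume "r \<in> R" "x \<in> smult A B"
  obtain n :: nat and a b where x: "\<forall>i<n. a i \<in> A \<and> b i \<in> B" "x = (\<Sum>i<n. a i * b i)"
    using \<open>x \<in> smult A B\<close> by (rule smultE)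
  have "r * x = (\<Sum>i<n. a i * (r * b i))"
    by (simp add: x(2) sum_distrib_left mult.left_commute)
  then show "r * x \<in> smult A B" using x(1) B \<open>r \<in> R\<close> by (intro smultI) auto
qed

lemma smult_scale:
  assumes "\<forall>a\<in>A. z * a \<in> B" "w \<in> smult A C"
  shows "z * w \<in> smult B C"
proof -
  obtain n :: nat and a c where "\<forall>i<n. a i \<in> A \<and> c i \<in> C" "w = (\<Sum>i<n. a i * c i)"
    using assms(2) by (rule smultE)
  then show ?thesis
    using assms(1) by (intro smultI[of n "\<lambda>i. z * a i" _ c]) (auto simp: sum_distrib_left mult.assoc)
qed

lemma ideal_smult:
  assumes "subring T" "A \<subseteq> T" shows "ideal_of T (smult A T)"
proof -
  have "smult A T \<subseteq> T"
    using assms by (intro smult_subset[OF subring_submod]) (auto intro: subring_mult)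
  then show ?thesis
    unfolding ideal_of_def using assms by (auto intro: submod_smult subring_mult)
qed

lemma smult_subset_ideal:
  assumes "ideal_of T J" "A \<subseteq> J" shows "smult A T \<subseteq> J"
proof (rule smult_subset[OF ideal_ofD(2)[OF assms(1)]], intro ballI)
  fix a b assume "a \<in> A" "b \<in> T"
  then show "a * b \<in> J"
    using assms submod_scale[OF ideal_ofD(2)[OF assms(1)], of b a] by (auto simp: mult.commute)
qed

lemma prime_ideal_smult_subset:
  assumes "prime_ideal_of T Q" "I \<subseteq> T" "J \<subseteq> T" "smult I J \<subseteq> Q"
  shows "I \<subseteq> Q \<or> J \<subseteq> Q"
proof (rule ccontr)
  assume "\<not> (I \<subseteq> Q \<or> J \<subseteq> Q)"
  then obtain a b where ab: "a \<in> I" "a \<notin> Q" "b \<in> J" "b \<notin> Q" by blast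
  then have "a * b \<notin> Q" using assms(1-3) by (intro prime_ideal_mult_notin[of T]) auto
  then show False using assms(4) mult_mem_smult[OF ab(1,3)] by blast
qed

lemma ideal_smult_ideals:
  assumes D: "subring D" and I: "ideal_of D I" and J: "ideal_of D J"
  shows "ideal_of D (smult I J)"
proof -
  have "smult I J \<subseteq> D"
    using ideal_ofD(1)[OF I] ideal_ofD(1)[OF J] subring_mult[OF D]
    by (intro smult_subset[OF subring_submod[OF D]]) blast
  moreover have "submod D (smult I J)"
    using submod_scale[OF ideal_ofD(2)[OF J]] by (intro submod_smult) blast
  ultimately show ?thesis by (simp add: ideal_of_def)
qed

lemma gen_mod_eq_smult: "gen_mod R S = smult R S"
  unfolding gen_mod_def smult_def by simp

lemma submod_gen_mod: "subring R \<Longrightarrow> submod R (gen_mod R S)"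
  unfolding gen_mod_eq_smult smult_commute[of R] by (auto intro: submod_smult subring_mult)

lemma subset_gen_mod: "subring R \<Longrightarrow> S \<subseteq> gen_mod R S"
  unfolding gen_mod_eq_smult smult_commute[of R] by (simp add: subset_smult subring_one)

lemma gen_mod_least:
  assumes "submod R E" "S \<subseteq> E" shows "gen_mod R S \<subseteq> E"
  unfolding gen_mod_eq_smult using assms by (intro smult_subset[of R E]) (auto intro: submod_scale)

lemma gen_mod_scale:
  assumes "x \<noteq> 0" shows "(*) x ` gen_mod R S = gen_mod R ((*) x ` S)"
proof
  show "(*) x ` gen_mod R S \<subseteq> gen_mod R ((*) x ` S)"
    unfolding gen_mod_eq_smult smult_commute[of R] by (auto intro: smult_scale[of S])
  show "gen_mod R ((*) x ` S) \<subseteq> (*) x ` gen_mod R S"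
  proof
    fix y assume "y \<in> gen_mod R ((*) x ` S)"
    moreover have "\<forall>a\<in>(*) x ` S. inverse x * a \<in> S" using assms by (auto simp: field_simps)
    ultimately have "inverse x * y \<in> gen_mod R S"
      unfolding gen_mod_eq_smult smult_commute[of R] by (intro smult_scale)
    moreover have "y = x * (inverse x * y)" using assms by simp
    ultimately show "y \<in> (*) x ` gen_mod R S" by blast
  qed
qed

lemma smult_gen_mod:
  assumes D: "subring D" and T: "subring T" and DT: "D \<subseteq> T"
  shows "smult (gen_mod D S) T = gen_mod T S"
proof
  have sub: "gen_mod D S \<subseteq> gen_mod T S"
    using submod_subset_ring[OF submod_gen_mod[OF T] DT] subset_gen_mod[OF T] by (rule gen_mod_least)
  show "smult (gen_mod D S) T \<subseteq> gen_mod T S"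
  proof (rule smult_subset[OF submod_gen_mod[OF T]], intro ballI)
    fix a b assume "a \<in> gen_mod D S" "b \<in> T"
    then show "a * b \<in> gen_mod T S"
      using sub submod_scale[OF submod_gen_mod[OF T], of b a] by (auto simp: mult.commute)
  qed
  have "submod T (smult (gen_mod D S) T)"
    using subring_mult[OF T] by (intro submod_smult) blast
  moreover have "S \<subseteq> smult (gen_mod D S) T"
    using subset_gen_mod[OF D] subset_smult[OF subring_one[OF T]] by blast
  ultimately show "gen_mod T S \<subseteq> smult (gen_mod D S) T"
    by (rule gen_mod_least)
qed

lemma Fbar_nonzero_elem:
  assumes "E \<in> Fbar R" obtains e where "e \<in> E" "e \<noteq> 0"
  using assms submod_zero by (fastforce simp: Fbar_def)

lemma ideal_Fbar: "ideal_of R I \<Longrightarrow> I \<noteq> {0} \<Longrightarrow> I \<in> Fbar R"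
  by (simp add: ideal_of_def Fbar_def)

lemma subring_Fbar: "subring R \<Longrightarrow> R \<in> Fbar R"
  using subring_one[of R] by (auto simp: Fbar_def subring_submod)

lemma ffgI: "subring R \<Longrightarrow> finite S \<Longrightarrow> gen_mod R S \<noteq> {0} \<Longrightarrow> gen_mod R S \<in> ffg R"
  unfolding ffg_def Fbar_def using submod_gen_mod by blast

lemma ffgE:
  assumes "F \<in> ffg R" obtains S where "finite S" "F = gen_mod R S"
  using assms by (auto simp: ffg_def)

lemma ffg_Fbar: "F \<in> ffg R \<Longrightarrow> F \<in> Fbar R"
  by (simp add: ffg_def)

lemma gen_mod_ffg:
  assumes "subring R" "finite S" "x \<in> S" "x \<noteq> 0" shows "gen_mod R S \<in> ffg R"
  using assms subset_gen_mod[OF assms(1), of S] by (intro ffgI) auto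

lemma gen_mod_mono:
  assumes "subring R" "S \<subseteq> S'" shows "gen_mod R S \<subseteq> gen_mod R S'"
  using subset_gen_mod[OF assms(1), of S'] assms(2)
  by (intro gen_mod_least[OF submod_gen_mod[OF assms(1)]]) blast

lemma ffg_scale:
  assumes R: "subring R" and F: "F \<in> ffg R" and x: "x \<noteq> 0"
  shows "(*) x ` F \<in> ffg R"
proof -
  obtain S where S: "finite S" "F = gen_mod R S" using F by (rule ffgE)
  obtain f where "f \<in> F" "f \<noteq> 0" using ffg_Fbar[OF F] by (rule Fbar_nonzero_elem)
  then have "x * f \<in> (*) x ` F" "x * f \<noteq> 0" using x by auto
  then have "(*) x ` F \<noteq> {0}" by blast
  then show ?thesis using S R x by (simp add: gen_mod_scale ffgI)
qed

lemma smult_ffg: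
  assumes D: "subring D" and T: "subring T" and DT: "D \<subseteq> T" and F: "F \<in> ffg D"
  shows "smult F T \<in> ffg T"
proof -
  obtain S where S: "finite S" "F = gen_mod D S" using F by (rule ffgE)
  obtain f where "f \<in> F" "f \<noteq> 0" using ffg_Fbar[OF F] by (rule Fbar_nonzero_elem)
  then have "smult F T \<noteq> {0}" using subset_smult[OF subring_one[OF T]] by blast
  then show ?thesis using S smult_gen_mod[OF D T DT] by (simp add: ffgI[OF T])
qed

lemma ffg_join:
  assumes R: "subring R" and E: "submod R E"
    and F1: "F1 \<in> ffg R" "F1 \<subseteq> E" and F2: "F2 \<in> ffg R" "F2 \<subseteq> E"
  obtains G where "G \<in> ffg R" "G \<subseteq> E" "F1 \<subseteq> G" "F2 \<subseteq> G"
proof -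
  obtain S1 where S1: "finite S1" "F1 = gen_mod R S1" using F1(1) by (rule ffgE)
  obtain S2 where S2: "finite S2" "F2 = gen_mod R S2" using F2(1) by (rule ffgE)
  define G where "G = gen_mod R (S1 \<union> S2)"
  have "F1 \<subseteq> G" "F2 \<subseteq> G" unfolding G_def S1(2) S2(2)
    using gen_mod_mono[OF R, of S1 "S1 \<union> S2"] gen_mod_mono[OF R, of S2 "S1 \<union> S2"] by auto
  moreover have "G \<subseteq> E"
    unfolding G_def using E F1(2) F2(2) S1(2) S2(2) subset_gen_mod[OF R]
    by (intro gen_mod_least) blast+
  moreover obtain f where "f \<in> F1" "f \<noteq> 0" using ffg_Fbar[OF F1(1)] by (rule Fbar_nonzero_elem)
  then have "G \<in> ffg R" unfolding G_def using \<open>F1 \<subseteq> G\<close> S1 S2 by (intro ffgI[OF R]) (auto simp: G_def)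
  ultimately show ?thesis using that by blast
qed

section \<open>Semistar operations of finite type\<close>

lemma semistar_Fbar: "semistar R st \<Longrightarrow> E \<in> Fbar R \<Longrightarrow> st E \<in> Fbar R"
  and semistar_extensive: "semistar R st \<Longrightarrow> E \<in> Fbar R \<Longrightarrow> E \<subseteq> st E"
  and semistar_idem: "semistar R st \<Longrightarrow> E \<in> Fbar R \<Longrightarrow> st (st E) = st E"
  and semistar_mono: "semistar R st \<Longrightarrow> E \<in> Fbar R \<Longrightarrow> F \<in> Fbar R \<Longrightarrow> E \<subseteq> F \<Longrightarrow> st E \<subseteq> st F"
  and semistar_scale: "semistar R st \<Longrightarrow> x \<noteq> 0 \<Longrightarrow> E \<in> Fbar R \<Longrightarrow> st ((*) x ` E) = (*) x ` st E"
  by (simp_all add: semistar_def)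

lemma submod_semistar: "semistar R st \<Longrightarrow> E \<in> Fbar R \<Longrightarrow> submod R (st E)"
  using semistar_Fbar[of R st E] by (simp add: Fbar_def)

lemma semistar_eq_if_one_mem:
  assumes R: "subring R" and st: "semistar R st" and F: "F \<in> Fbar R" "F \<subseteq> R" and one: "1 \<in> st F"
  shows "st F = st R"
proof
  show "st F \<subseteq> st R" using semistar_mono[OF st F(1) subring_Fbar[OF R] F(2)] .
  have "R \<subseteq> st F"
    using submod_scale[OF submod_semistar[OF st F(1)] _ one] by (metis mult.right_neutral subsetI)
  then have "st R \<subseteq> st (st F)"
    using semistar_mono[OF st subring_Fbar[OF R] semistar_Fbar[OF st F(1)]] by blast
  then show "st R \<subseteq> st F" using semistar_idem[OF st F(1)] by simp
qed

lemma star_f_mono: "E \<subseteq> E' \<Longrightarrow> star_f R st E \<subseteq> star_f R st E'"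
  unfolding star_f_def by blast

lemma semistar_subset_star_f: "F \<in> ffg R \<Longrightarrow> F \<subseteq> E \<Longrightarrow> st F \<subseteq> star_f R st E"
  unfolding star_f_def by blast

lemma star_f_memE:
  assumes "x \<in> star_f R st E" obtains F where "F \<in> ffg R" "F \<subseteq> E" "x \<in> st F"
  using assms unfolding star_f_def by blast

lemma star_f_extensive:
  assumes R: "subring R" and st: "semistar R st" and E: "E \<in> Fbar R"
  shows "E \<subseteq> star_f R st E"
proof
  fix x assume x: "x \<in> E"
  obtain e where e: "e \<in> E" "e \<noteq> 0" using E by (rule Fbar_nonzero_elem)
  \<comment> \<open>the nonzero generator e is needed when x = 0, since ffg R excludes {0}\<close>
  define F where "F = gen_mod R {x, e}"
  have F: "F \<in> ffg R" unfolding F_def using R e(2) by (intro gen_mod_ffg) auto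
  have "F \<subseteq> E" unfolding F_def using E x e(1) by (intro gen_mod_least) (auto simp: Fbar_def)
  moreover have "x \<in> st F"
    using semistar_extensive[OF st ffg_Fbar[OF F]] subset_gen_mod[OF R] unfolding F_def by blast
  ultimately show "x \<in> star_f R st E" using semistar_subset_star_f[OF F] by blast
qed

lemma star_f_directed:
  assumes R: "subring R" and st: "semistar R st" and E: "E \<in> Fbar R"
    and S: "finite S" "S \<subseteq> star_f R st E"
  shows "\<exists>G\<in>ffg R. G \<subseteq> E \<and> S \<subseteq> st G"
  using S
proof (induction S rule: finite_induct)
  case empty
  obtain e where e: "e \<in> E" "e \<noteq> 0" using E by (rule Fbar_nonzero_elem)
  have "gen_mod R {e} \<subseteq> E" using E e(1) by (intro gen_mod_least) (auto simp: Fbar_def)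
  moreover have "gen_mod R {e} \<in> ffg R" using e(2) by (intro gen_mod_ffg[OF R]) auto
  ultimately show ?case by blast
next
  case (insert x S)
  obtain G1 where G1: "G1 \<in> ffg R" "G1 \<subseteq> E" "S \<subseteq> st G1"
    using insert.IH insert.prems by blast
  obtain F where F: "F \<in> ffg R" "F \<subseteq> E" "x \<in> st F"
    using star_f_memE[of x R st E] insert.prems by blast
  obtain G where G: "G \<in> ffg R" "G \<subseteq> E" "G1 \<subseteq> G" "F \<subseteq> G"
    using ffg_join[OF R _ G1(1,2) F(1,2)] E unfolding Fbar_def by blast
  have "st G1 \<subseteq> st G" "st F \<subseteq> st G"
    using semistar_mono[OF st ffg_Fbar[OF G1(1)] ffg_Fbar[OF G(1)] G(3)]
      semistar_mono[OF st ffg_Fbar[OF F(1)] ffg_Fbar[OF G(1)] G(4)] .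
  then show ?case using G(1,2) G1(3) F(3) by blast
qed

lemma submod_star_f:
  assumes R: "subring R" and st: "semistar R st" and E: "E \<in> Fbar R"
  shows "submod R (star_f R st E)"
  unfolding submod_def
proof (intro conjI ballI)
  show "0 \<in> star_f R st E"
    using star_f_extensive[OF R st E] E by (auto simp: Fbar_def dest: submod_zero)
  fix x y assume "x \<in> star_f R st E" "y \<in> star_f R st E"
  then obtain G where G: "G \<in> ffg R" "G \<subseteq> E" "{x, y} \<subseteq> st G"
    using star_f_directed[OF R st E, of "{x, y}"] by auto
  then have "x + y \<in> st G" using submod_add[OF submod_semistar[OF st ffg_Fbar]] by auto
  then show "x + y \<in> star_f R st E" using semistar_subset_star_f[OF G(1,2)] by blast
next
  fix r x assume "r \<in> R" "x \<in> star_f R st E"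
  then obtain G where G: "G \<in> ffg R" "G \<subseteq> E" "x \<in> st G" by (auto elim: star_f_memE)
  then have "r * x \<in> st G" using submod_scale[OF submod_semistar[OF st ffg_Fbar]] \<open>r \<in> R\<close> by auto
  then show "r * x \<in> star_f R st E" using semistar_subset_star_f[OF G(1,2)] by blast
qed

lemma star_f_idem:
  assumes R: "subring R" and st: "semistar R st" and E: "E \<in> Fbar R"
  shows "star_f R st (star_f R st E) \<subseteq> star_f R st E"
proof
  fix x assume "x \<in> star_f R st (star_f R st E)"
  then obtain F where F: "F \<in> ffg R" "F \<subseteq> star_f R st E" "x \<in> st F" by (rule star_f_memE)
  obtain S where S: "finite S" "F = gen_mod R S" using F(1) by (rule ffgE)
  have "S \<subseteq> star_f R st E" using F(2) S(2) subset_gen_mod[OF R] by blast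
  then obtain G where G: "G \<in> ffg R" "G \<subseteq> E" "S \<subseteq> st G"
    using star_f_directed[OF R st E S(1)] by blast
  have "F \<subseteq> st G" unfolding S(2) by (rule gen_mod_least[OF submod_semistar[OF st ffg_Fbar[OF G(1)]] G(3)])
  then have "st F \<subseteq> st G"
    using semistar_mono[OF st ffg_Fbar[OF F(1)] semistar_Fbar[OF st ffg_Fbar[OF G(1)]]]
      semistar_idem[OF st ffg_Fbar[OF G(1)]] by simp
  then show "x \<in> star_f R st E" using F(3) semistar_subset_star_f[OF G(1,2)] by blast
qed

lemma star_f_eq_iff_one_mem:
  assumes R: "subring R" and st: "semistar R st" and J: "J \<subseteq> R"
  shows "star_f R st J = st R \<longleftrightarrow> 1 \<in> star_f R st J"
proof
  assume "star_f R st J = st R"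
  then show "1 \<in> star_f R st J" using semistar_extensive[OF st subring_Fbar[OF R]] subring_one[OF R] by blast
next
  assume "1 \<in> star_f R st J"
  then obtain F where F: "F \<in> ffg R" "F \<subseteq> J" "1 \<in> st F" by (rule star_f_memE)
  have "st F = st R" using semistar_eq_if_one_mem[OF R st ffg_Fbar[OF F(1)]] F J by blast
  then have "st R \<subseteq> star_f R st J" using semistar_subset_star_f[OF F(1,2), of st] by simp
  moreover have "star_f R st J \<subseteq> st R"
  proof
    fix y assume "y \<in> star_f R st J"
    then obtain G where G: "G \<in> ffg R" "G \<subseteq> J" "y \<in> st G" by (rule star_f_memE)
    then show "y \<in> st R" using semistar_mono[OF st ffg_Fbar[OF G(1)] subring_Fbar[OF R]] J by blast
  qed
  ultimately show "star_f R st J = st R" by blast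
qed

lemma mem_star_f_if_scaled_unit:
  assumes R: "subring R" and st: "semistar R st"
    and F: "F \<in> ffg R" "1 \<in> st F" and x: "x \<noteq> 0" and xF: "(*) x ` F \<subseteq> E"
  shows "x \<in> star_f R st E"
proof -
  have "x \<in> st ((*) x ` F)" using semistar_scale[OF st x ffg_Fbar[OF F(1)]] F(2) by force
  then show ?thesis using semistar_subset_star_f[OF ffg_scale[OF R F(1) x] xF] by blast
qed

section \<open>Quasi-maximal ideals\<close>

lemma one_notin_star_f_if_quasi_ideal:
  assumes R: "subring R" and Q: "quasi_ideal R (star_f R st) Q" "Q \<noteq> R" and J: "J \<subseteq> Q"
  shows "1 \<notin> star_f R st J"
proof
  assume "1 \<in> star_f R st J"
  then have "1 \<in> star_f R st Q \<inter> R" using star_f_mono[OF J] subring_one[OF R] by blast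
  then have "1 \<in> Q" using Q(1) unfolding quasi_ideal_def by blast
  then show False using ideal_eq_if_one_mem Q by (auto simp: quasi_ideal_def)
qed

lemma ideal_subset_star_f_Int:
  assumes R: "subring R" and st: "semistar R st" and J: "ideal_of R J" "J \<noteq> {0}"
  shows "J \<subseteq> star_f R st J \<inter> R"
  using star_f_extensive[OF R st ideal_Fbar[OF J]] ideal_ofD(1)[OF J(1)] by blast

lemma star_f_Int_subset:
  assumes R: "subring R" and st: "semistar R st" and E: "E \<in> Fbar R"
  shows "star_f R st (star_f R st E \<inter> R) \<subseteq> star_f R st E"
  using star_f_mono[of "star_f R st E \<inter> R" "star_f R st E" R st] star_f_idem[OF R st E] by blast

lemma quasi_ideal_star_f_Int:
  assumes R: "subring R" and st: "semistar R st" and J: "ideal_of R J" "J \<noteq> {0}"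
  shows "quasi_ideal R (star_f R st) (star_f R st J \<inter> R)"
proof -
  let ?J = "star_f R st J \<inter> R"
  have nz: "?J \<noteq> {0}"
    using ideal_subset_star_f_Int[OF assms] J(2) submod_zero[OF ideal_ofD(2)[OF J(1)]] by blast
  have id: "ideal_of R ?J"
    unfolding ideal_of_def
    using submod_Int[OF submod_star_f[OF R st ideal_Fbar[OF J]] subring_submod[OF R]] by blast
  have "?J \<subseteq> star_f R st ?J" using star_f_extensive[OF R st ideal_Fbar[OF id nz]] .
  then show ?thesis
    unfolding quasi_ideal_def using id nz star_f_Int_subset[OF R st ideal_Fbar[OF J]] by blast
qed

lemma MfD:
  assumes "Q \<in> Mf R st"
  shows "quasi_ideal R (star_f R st) Q" "Q \<noteq> R" "ideal_of R Q" "Q \<noteq> {0}"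
  using assms by (simp_all add: Mf_def quasi_max_def quasi_ideal_def)

lemma Mf_one_notin_star_f: "subring R \<Longrightarrow> Q \<in> Mf R st \<Longrightarrow> J \<subseteq> Q \<Longrightarrow> 1 \<notin> star_f R st J"
  using one_notin_star_f_if_quasi_ideal MfD by blast

lemma Mf_maximal:
  assumes R: "subring R" and st: "semistar R st" and Q: "Q \<in> Mf R st"
    and I: "ideal_of R I" "Q \<subseteq> I" "1 \<notin> star_f R st I"
  shows "I \<subseteq> Q"
proof -
  have "0 \<in> Q" using submod_zero[OF ideal_ofD(2)[OF MfD(3)[OF Q]]] .
  then have nz: "I \<noteq> {0}" using MfD(4)[OF Q] I(2) by blast
  have "star_f R st I \<inter> R \<noteq> R" using I(3) subring_one[OF R] by blast
  moreover have "Q \<subseteq> star_f R st I \<inter> R" using I(2) ideal_subset_star_f_Int[OF R st I(1) nz] by blast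
  ultimately have "star_f R st I \<inter> R = Q"
    using Q quasi_ideal_star_f_Int[OF R st I(1) nz] unfolding Mf_def quasi_max_def by blast
  then show ?thesis using ideal_subset_star_f_Int[OF R st I(1) nz] by blast
qed

lemma ideal_Union_chain:
  assumes C: "C \<noteq> {}" "subset.chain A C" and ideals: "\<forall>X\<in>C. ideal_of R X"
  shows "ideal_of R (\<Union>C)"
  unfolding ideal_of_def submod_def
proof (intro conjI ballI)
  show "\<Union>C \<subseteq> R" using ideals ideal_ofD(1) by blast
  obtain X where "X \<in> C" using C(1) by blast
  then show "0 \<in> \<Union>C" using ideals submod_zero[OF ideal_ofD(2)] by blast
next
  fix x y assume "x \<in> \<Union>C" "y \<in> \<Union>C"
  then obtain X Y where XY: "X \<in> C" "Y \<in> C" "x \<in> X" "y \<in> Y" by blast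
  then have "X \<subseteq> Y \<or> Y \<subseteq> X" using C(2) unfolding subset.chain_def by blast
  then have "x + y \<in> X \<or> x + y \<in> Y"
    using XY ideals submod_add[OF ideal_ofD(2)] by blast
  then show "x + y \<in> \<Union>C" using XY by blast
next
  fix r x assume "r \<in> R" "x \<in> \<Union>C"
  then show "r * x \<in> \<Union>C" using ideals submod_scale[OF ideal_ofD(2)] by blast
qed

lemma one_notin_star_f_Union_chain:
  assumes R: "subring R" and C: "C \<noteq> {}" "subset.chain A C"
    and proper: "\<forall>X\<in>C. submod R X \<and> 1 \<notin> star_f R st X"
  shows "1 \<notin> star_f R st (\<Union>C)"
proof
  assume "1 \<in> star_f R st (\<Union>C)"
  then obtain F where F: "F \<in> ffg R" "F \<subseteq> \<Union>C" "1 \<in> st F" by (rule star_f_memE)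
  obtain S where S: "finite S" "F = gen_mod R S" using F(1) by (rule ffgE)
  have "S \<subseteq> \<Union>C" using F(2) S(2) subset_gen_mod[OF R] by blast
  then obtain X where X: "X \<in> C" "S \<subseteq> X" using finite_subset_Union_chain[OF S(1) _ C] by blast
  have "F \<subseteq> X" unfolding S(2) using proper X by (intro gen_mod_least) auto
  then show False using semistar_subset_star_f[OF F(1), of X st] F(3) proper X(1) by blast
qed

lemma maximal_star_f_proper_idealE:
  assumes R: "subring R" and J: "ideal_of R J" "1 \<notin> star_f R st J"
  obtains M where "ideal_of R M" "J \<subseteq> M" "1 \<notin> star_f R st M"
    "\<And>I. ideal_of R I \<Longrightarrow> M \<subseteq> I \<Longrightarrow> 1 \<notin> star_f R st I \<Longrightarrow> I = M"
proof -
  define A where "A = {I. ideal_of R I \<and> J \<subseteq> I \<and> 1 \<notin> star_f R st I}"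
  have "\<exists>M\<in>A. \<forall>X\<in>A. M \<subseteq> X \<longrightarrow> X = M"
  proof (rule subset_Zorn_nonempty)
    show "A \<noteq> {}" using J unfolding A_def by blast
    fix C assume C: "C \<noteq> {}" "subset.chain A C"
    then have CA: "\<forall>X\<in>C. ideal_of R X \<and> J \<subseteq> X \<and> 1 \<notin> star_f R st X"
      unfolding A_def subset.chain_def by blast
    have "ideal_of R (\<Union>C)" using ideal_Union_chain[OF C] CA by blast
    moreover have "J \<subseteq> \<Union>C" using C(1) CA by blast
    moreover have "1 \<notin> star_f R st (\<Union>C)"
      using one_notin_star_f_Union_chain[OF R C] CA ideal_ofD(2) by blast
    ultimately show "\<Union>C \<in> A" unfolding A_def by blast
  qed
  then obtain M where M: "ideal_of R M" "J \<subseteq> M" "1 \<notin> star_f R st M"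
    and max: "\<forall>X\<in>A. M \<subseteq> X \<longrightarrow> X = M"
    unfolding A_def by blast
  show thesis
  proof (rule that[OF M])
    fix I assume "ideal_of R I" "M \<subseteq> I" "1 \<notin> star_f R st I"
    then show "I = M" using max M(2) unfolding A_def by blast
  qed
qed

lemma Mf_if_maximal_star_f_proper:
  assumes R: "subring R" and st: "semistar R st"
    and M: "ideal_of R M" "M \<noteq> {0}" "1 \<notin> star_f R st M"
    and max: "\<And>I. ideal_of R I \<Longrightarrow> M \<subseteq> I \<Longrightarrow> 1 \<notin> star_f R st I \<Longrightarrow> I = M"
  shows "M \<in> Mf R st"
proof -
  let ?M = "star_f R st M \<inter> R"
  have qi: "quasi_ideal R (star_f R st) ?M" using quasi_ideal_star_f_Int[OF R st M(1,2)] .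
  have "1 \<notin> star_f R st ?M" using M(3) star_f_Int_subset[OF R st ideal_Fbar[OF M(1,2)]] by blast
  then have eq: "?M = M"
    using max qi ideal_subset_star_f_Int[OF R st M(1,2)] unfolding quasi_ideal_def by blast
  have "quasi_max R (star_f R st) M"
    unfolding quasi_max_def
  proof (intro conjI allI impI)
    show "quasi_ideal R (star_f R st) M" using qi eq by simp
    show "M \<noteq> R" using M(3) subring_one[OF R] eq by blast
    fix I assume I: "quasi_ideal R (star_f R st) I \<and> I \<noteq> R \<and> M \<subseteq> I"
    then have "1 \<notin> star_f R st I" using one_notin_star_f_if_quasi_ideal[OF R, of st I I] by blast
    then show "I = M" using max I unfolding quasi_ideal_def by blast
  qed
  then show ?thesis unfolding Mf_def by blast
qed

lemma Mf_supersetE: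
  assumes R: "subring R" and st: "semistar R st"
    and J: "ideal_of R J" "J \<noteq> {0}" "1 \<notin> star_f R st J"
  obtains Q where "Q \<in> Mf R st" "J \<subseteq> Q"
proof -
  obtain M where M: "ideal_of R M" "J \<subseteq> M" "1 \<notin> star_f R st M"
    and max: "\<And>I. ideal_of R I \<Longrightarrow> M \<subseteq> I \<Longrightarrow> 1 \<notin> star_f R st I \<Longrightarrow> I = M"
    using maximal_star_f_proper_idealE[OF R J(1,3)] by blast
  have "M \<noteq> {0}" using M(2) J(2) submod_zero[OF ideal_ofD(2)[OF J(1)]] by blast
  then have "M \<in> Mf R st" using Mf_if_maximal_star_f_proper[OF R st M(1) _ M(3) max] by blast
  then show thesis using that M(2) by blast
qed

lemma ideal_add_principal:
  assumes R: "subring R" and Q: "ideal_of R Q" and a: "a \<in> R"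
  shows "ideal_of R {q + a * r | q r. q \<in> Q \<and> r \<in> R}"
  unfolding ideal_of_def submod_def
proof (intro conjI ballI)
  have QR: "Q \<subseteq> R" using ideal_ofD(1)[OF Q] .
  show "{q + a * r | q r. q \<in> Q \<and> r \<in> R} \<subseteq> R"
    using QR a by (auto intro!: subring_add[OF R] subring_mult[OF R])
  show "0 \<in> {q + a * r | q r. q \<in> Q \<and> r \<in> R}"
    using submod_zero[OF ideal_ofD(2)[OF Q]] subring_zero[OF R] by force
next
  fix x y assume "x \<in> {q + a * r | q r. q \<in> Q \<and> r \<in> R}" "y \<in> {q + a * r | q r. q \<in> Q \<and> r \<in> R}"
  then obtain q1 r1 q2 r2 where x: "x = q1 + a * r1" "q1 \<in> Q" "r1 \<in> R"
    and y: "y = q2 + a * r2" "q2 \<in> Q" "r2 \<in> R" by blast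
  have "x + y = (q1 + q2) + a * (r1 + r2)" using x(1) y(1) by (simp add: algebra_simps)
  moreover have "q1 + q2 \<in> Q" "r1 + r2 \<in> R"
    using x y submod_add[OF ideal_ofD(2)[OF Q]] subring_add[OF R] by auto
  ultimately show "x + y \<in> {q + a * r | q r. q \<in> Q \<and> r \<in> R}" by blast
next
  fix d x assume d: "d \<in> R" and "x \<in> {q + a * r | q r. q \<in> Q \<and> r \<in> R}"
  then obtain q r where x: "x = q + a * r" "q \<in> Q" "r \<in> R" by blast
  have "d * x = d * q + a * (d * r)" using x(1) by (simp add: algebra_simps)
  moreover have "d * q \<in> Q" "d * r \<in> R"
    using x d submod_scale[OF ideal_ofD(2)[OF Q]] subring_mult[OF R] by auto
  ultimately show "d * x \<in> {q + a * r | q r. q \<in> Q \<and> r \<in> R}" by blast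
qed

lemma Mf_prime:
  assumes R: "subring R" and st: "semistar R st" and Q: "Q \<in> Mf R st"
  shows "prime_ideal_of R Q"
  unfolding prime_ideal_of_def
proof (intro conjI ballI impI)
  have Qi: "ideal_of R Q" using MfD(3)[OF Q] .
  show "ideal_of R Q" "Q \<noteq> R" using MfD[OF Q] by auto
  fix a b assume ab: "a \<in> R" "b \<in> R" "a * b \<in> Q"
  show "a \<in> Q \<or> b \<in> Q"
  proof (rule ccontr)
    assume "\<not> (a \<in> Q \<or> b \<in> Q)"
    then have a: "a \<notin> Q" and b: "b \<notin> Q" by auto
    \<comment> \<open>By maximality 1 \<in> (Q + aR)^{st_f}; multiplying a finite witness by b lands in Q.\<close>
    define J where "J = {q + a * r | q r. q \<in> Q \<and> r \<in> R}"
    have J: "ideal_of R J" unfolding J_def using ideal_add_principal[OF R Qi ab(1)] .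
    have "Q \<subseteq> J" unfolding J_def using subring_zero[OF R] by force
    moreover have "a \<in> J"
      unfolding J_def using subring_one[OF R] submod_zero[OF ideal_ofD(2)[OF Qi]] by force
    ultimately have "1 \<in> star_f R st J" using Mf_maximal[OF R st Q J] a by blast
    then obtain F where F: "F \<in> ffg R" "F \<subseteq> J" "1 \<in> st F" by (rule star_f_memE)
    have "(*) b ` F \<subseteq> Q"
    proof
      fix y assume "y \<in> (*) b ` F"
      then obtain q r where y: "y = b * (q + a * r)" "q \<in> Q" "r \<in> R" using F(2) unfolding J_def by blast
      have "y = b * q + r * (a * b)" using y(1) by (simp add: algebra_simps)
      then show "y \<in> Q"
        using y(2,3) ab submod_add[OF ideal_ofD(2)[OF Qi]] submod_scale[OF ideal_ofD(2)[OF Qi]] by simp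
    qed
    moreover have "b \<noteq> 0" using b submod_zero[OF ideal_ofD(2)[OF Qi]] by blast
    ultimately have "b \<in> star_f R st Q" using mem_star_f_if_scaled_unit[OF R st F(1,3)] by blast
    then show False using b MfD(1)[OF Q] ab(2) unfolding quasi_ideal_def by blast
  qed
qed

lemma Mf_quasi_prime: "subring R \<Longrightarrow> semistar R st \<Longrightarrow> Q \<in> Mf R st \<Longrightarrow> quasi_prime R (star_f R st) Q"
  by (simp add: quasi_prime_def MfD Mf_prime)

section \<open>Localizations\<close>

definition mult_closed :: "'k::field set \<Rightarrow> bool" where
  "mult_closed S \<longleftrightarrow> 1 \<in> S \<and> 0 \<notin> S \<and> (\<forall>s\<in>S. \<forall>t\<in>S. s * t \<in> S)"

lemma mult_closed_prime_compl:
  assumes R: "subring R" and P: "prime_ideal_of R P"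
  shows "mult_closed (R - P)"
proof -
  have "0 \<in> P" using P submod_zero[OF ideal_ofD(2)] by (auto simp: prime_ideal_of_def)
  moreover have "s * t \<in> R - P" if "s \<in> R - P" "t \<in> R - P" for s t
    using that prime_ideal_mult_notin[OF P] subring_mult[OF R] by blast
  ultimately show ?thesis
    unfolding mult_closed_def using one_notin_prime_ideal[OF P] subring_one[OF R] by blast
qed

lemma locI: "a \<in> R \<Longrightarrow> s \<in> S \<Longrightarrow> x = a / s \<Longrightarrow> x \<in> loc R S"
  unfolding loc_def by blast

lemma locE:
  assumes "x \<in> loc R S" obtains a s where "a \<in> R" "s \<in> S" "x = a / s"
  using assms unfolding loc_def by blast

lemma loc_mono: "S \<subseteq> S' \<Longrightarrow> loc R S \<subseteq> loc R S'"
  unfolding loc_def by blast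

lemma subset_loc: "1 \<in> S \<Longrightarrow> R \<subseteq> loc R S"
  by (auto intro: locI[of _ R 1])

lemma submod_loc:
  assumes R: "subring R" and E: "submod R E" and S: "S \<subseteq> R" "mult_closed S"
  shows "submod (loc R S) (loc E S)"
  unfolding submod_def
proof (intro conjI ballI)
  show "0 \<in> loc E S" using locI[of 0 E 1 S] submod_zero[OF E] S(2) by (simp add: mult_closed_def)
next
  fix x y assume "x \<in> loc E S" "y \<in> loc E S"
  then obtain a s b t where x: "a \<in> E" "s \<in> S" "x = a / s" and y: "b \<in> E" "t \<in> S" "y = b / t"
    by (metis locE)
  have "s \<noteq> 0" "t \<noteq> 0" using x(2) y(2) S(2) by (auto simp: mult_closed_def)
  then have "x + y = (t * a + s * b) / (s * t)" using x(3) y(3) by (simp add: field_simps)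
  moreover have "t * a + s * b \<in> E"
    using x y S(1) submod_add[OF E] submod_scale[OF E] by blast
  moreover have "s * t \<in> S" using x(2) y(2) S(2) by (simp add: mult_closed_def)
  ultimately show "x + y \<in> loc E S" by (blast intro: locI)
next
  fix r x assume "r \<in> loc R S" "x \<in> loc E S"
  then obtain c u a s where r: "c \<in> R" "u \<in> S" "r = c / u" and x: "a \<in> E" "s \<in> S" "x = a / s"
    by (metis locE)
  have "r * x = (c * a) / (u * s)" using r(3) x(3) by simp
  moreover have "c * a \<in> E" using r(1) x(1) submod_scale[OF E] by blast
  moreover have "u * s \<in> S" using r(2) x(2) S(2) by (simp add: mult_closed_def)
  ultimately show "r * x \<in> loc E S" by (blast intro: locI)
qed

lemma smult_loc_self:
  assumes R: "subring R" and S: "S \<subseteq> R" "mult_closed S"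
  shows "smult R (loc R S) = loc R S"
proof
  have RS: "R \<subseteq> loc R S" using S(2) by (simp add: subset_loc mult_closed_def)
  have sub: "submod (loc R S) (loc R S)" using submod_loc[OF R subring_submod[OF R] S] .
  show "smult R (loc R S) \<subseteq> loc R S"
    using RS submod_scale[OF sub] by (intro smult_subset[OF sub]) blast
  show "loc R S \<subseteq> smult R (loc R S)"
    using subset_smult[OF subring_one[OF R], of "loc R S"] by (simp only: smult_commute)
qed

lemma loc_mem_iff_colon:
  assumes "0 \<in> P"
  shows "x \<in> loc D (D - P) \<longleftrightarrow> \<not> {d \<in> D. d * x \<in> D} \<subseteq> P"
proof
  assume "x \<in> loc D (D - P)"
  then obtain a s where as: "a \<in> D" "s \<in> D - P" "x = a / s" by (rule locE)
  then have "s * x = a" using assms by auto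
  then show "\<not> {d \<in> D. d * x \<in> D} \<subseteq> P" using as by auto
next
  assume "\<not> {d \<in> D. d * x \<in> D} \<subseteq> P"
  then obtain s where s: "s \<in> D" "s * x \<in> D" "s \<notin> P" by blast
  then have "x = (s * x) / s" using assms by auto
  then show "x \<in> loc D (D - P)" using s by (intro locI[of "s * x" D s]) auto
qed

lemma loc_contraction_eq:
  assumes D: "subring D" and DT: "D \<subseteq> T" and Q: "prime_ideal_of T Q"
    and TL: "T \<subseteq> loc D (D - (Q \<inter> D))"
  shows "loc D (D - (Q \<inter> D)) = loc T (T - Q)"
proof
  show "loc D (D - (Q \<inter> D)) \<subseteq> loc T (T - Q)" unfolding loc_def using DT by blast
  show "loc T (T - Q) \<subseteq> loc D (D - (Q \<inter> D))"
  proof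
    fix x assume "x \<in> loc T (T - Q)"
    then obtain t u where tu: "t \<in> T" "u \<in> T - Q" "x = t / u" by (rule locE)
    obtain a s where as: "a \<in> D" "s \<in> D - Q" "t = a / s" using TL tu(1) by (blast elim: locE)
    obtain b r where br: "b \<in> D" "r \<in> D - Q" "u = b / r" using TL tu(2) by (blast elim: locE)
    have "0 \<in> Q" using Q submod_zero[OF ideal_ofD(2)] by (auto simp: prime_ideal_of_def)
    then have nz: "s \<noteq> 0" "r \<noteq> 0" "u \<noteq> 0" using as(2) br(2) tu(2) by auto
    have "b = u * r" using br(3) nz(2) by simp
    then have "b \<notin> Q" using prime_ideal_mult_notin[OF Q] tu(2) br(2) DT by blast
    then have "s * b \<notin> Q" using prime_ideal_mult_notin[OF Q] as(2) br(1) DT by blast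
    moreover have "x = (a * r) / (s * b)"
      using tu(3) as(3) br(3) nz by (simp add: field_simps)
    moreover have "s * b \<in> D" "a * r \<in> D" using as br subring_mult[OF D] by auto
    ultimately show "x \<in> loc D (D - (Q \<inter> D))" by (intro locI[of "a * r" D "s * b"]) auto
  qed
qed

lemma mem_loc_contraction_if_scaled_mem:
  assumes D: "subring D" and DT: "D \<subseteq> T" and Q: "prime_ideal_of T Q"
    and S: "S \<subseteq> D - Q" "0 \<notin> S" and c: "c \<in> loc D S" "c \<notin> loc Q S" and tc: "t * c \<in> loc D S"
  shows "t \<in> loc D (D - (Q \<inter> D))"
proof -
  obtain d s where ds: "d \<in> D" "s \<in> S" "c = d / s" using c(1) by (rule locE)
  obtain e w where ew: "e \<in> D" "w \<in> S" "t * c = e / w" using tc by (rule locE)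
  have "d \<notin> Q" using c(2) ds by (blast intro: locI)
  then have "w * d \<notin> Q" using prime_ideal_mult_notin[OF Q] ds(1) ew(2) S(1) DT by blast
  moreover have "w * d \<in> D" "e * s \<in> D" using ds ew S(1) subring_mult[OF D] by auto
  moreover have "t = (e * s) / (w * d)"
  proof -
    have "s \<noteq> 0" "w \<noteq> 0" using ds(2) ew(2) S(2) by auto
    moreover have "d \<noteq> 0"
      using \<open>d \<notin> Q\<close> Q submod_zero[OF ideal_ofD(2)] by (auto simp: prime_ideal_of_def)
    ultimately show ?thesis using ew(3) ds(3) by (simp add: field_simps)
  qed
  ultimately show ?thesis by (intro locI[of "e * s" D "w * d"]) auto
qed

lemma one_mem_loc_Mf: "subring R \<Longrightarrow> Q \<in> Mf R st \<Longrightarrow> 1 \<in> loc R (R - Q)"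
  using locI[of 1 R 1 "R - Q" 1] subring_one[of R] ideal_eq_if_one_mem[OF MfD(3)] MfD(2) by fastforce

lemma subset_tilde:
  assumes "subring R" shows "E \<subseteq> tilde R st E"
proof
  fix e assume "e \<in> E"
  then have "e * 1 \<in> smult E (loc R (R - Q))" if "Q \<in> Mf R st" for Q
    using mult_mem_smult one_mem_loc_Mf[OF assms that] by blast
  then show "e \<in> tilde R st E" unfolding tilde_def by auto
qed

lemma tilde_ring_eq:
  assumes R: "subring R" and st: "semistar R st"
  shows "tilde R st R = \<Inter>{loc R (R - Q) | Q. Q \<in> Mf R st}"
proof -
  have "smult R (loc R (R - Q)) = loc R (R - Q)" if "Q \<in> Mf R st" for Q
    using smult_loc_self[OF R _ mult_closed_prime_compl[OF R Mf_prime[OF R st that]]] by blast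
  then show ?thesis unfolding tilde_def by (metis (mono_tags, lifting))
qed

lemma tilde_scale:
  assumes "\<forall>a\<in>I. z * a \<in> E" shows "(*) z ` tilde R st I \<subseteq> tilde R st E"
  unfolding tilde_def using smult_scale[OF assms] by blast

lemma flat_over_two_term_relationE:
  assumes flat: "flat_over A M" and a: "a0 \<in> A" "a1 \<in> A" and m: "m0 \<in> M" "m1 \<in> M"
    and rel: "a0 * m0 + a1 * m1 = 0"
  obtains k :: nat and b0 b1 y
  where "\<forall>j<k. y j \<in> M \<and> b0 j \<in> A \<and> b1 j \<in> A \<and> a0 * b0 j + a1 * b1 j = 0"
    "m0 = (\<Sum>j<k. b0 j * y j)" "m1 = (\<Sum>j<k. b1 j * y j)"
proof -
  define a' where "a' = (\<lambda>i::nat. if i = 0 then a0 else a1)"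
  define m' where "m' = (\<lambda>i::nat. if i = 0 then m0 else m1)"
  have "\<forall>i<2. a' i \<in> A \<and> m' i \<in> M" using a m by (simp add: a'_def m'_def)
  moreover have "(\<Sum>i<2. a' i * m' i) = 0" using rel by (simp add: a'_def m'_def numeral_2_eq_2)
  ultimately obtain k :: nat and b :: "nat \<Rightarrow> nat \<Rightarrow> 'a" and y
    where "\<forall>j<k. y j \<in> M" "\<forall>i<2. \<forall>j<k. b i j \<in> A"
      "\<forall>i<2. m' i = (\<Sum>j<k. b i j * y j)" "\<forall>j<k. (\<Sum>i<2. a' i * b i j) = 0"
    using flat[unfolded flat_over_def, rule_format, of 2 a' m'] by blast
  then show thesis
    by (intro that[of k y "b 0" "b 1"]) (auto simp: a'_def m'_def numeral_2_eq_2)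
qed

lemma coeff_notin_loc_idealE:
  assumes T: "subring T" and Q: "ideal_of T Q" and S: "S \<subseteq> T" "mult_closed S" "S \<inter> Q = {}"
    and y: "\<forall>j<k. y j \<in> loc T S" and one: "1 = (\<Sum>j<(k::nat). c j * y j)"
  obtains j where "j < k" "c j \<notin> loc Q S"
proof -
  have sub: "submod (loc T S) (loc Q S)" using submod_loc[OF T ideal_ofD(2)[OF Q] S(1,2)] .
  have "1 \<notin> loc Q S"
  proof
    assume "1 \<in> loc Q S"
    then obtain q s where qs: "q \<in> Q" "s \<in> S" "1 = q / s" by (rule locE)
    then have "q = s" using S(2) by (auto simp: mult_closed_def field_simps split: if_splits)
    then show False using qs S(3) by blast
  qed
  moreover have "c j * y j \<in> loc Q S" if "j < k" "c j \<in> loc Q S" for j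
    using submod_scale[OF sub, of "y j" "c j"] y that by (simp add: mult.commute)
  ultimately have "\<not> (\<forall>j<k. c j \<in> loc Q S)"
    using submod_sum[OF sub, of k "\<lambda>j. c j * y j"] one by auto
  then show thesis using that by blast
qed

section \<open>Overrings\<close>

lemma star_f_smult_eq_iff:
  assumes T: "subring T" and st': "semistar T st'" and I: "I \<subseteq> T" "x \<in> I" "x \<noteq> 0"
  shows "star_f T st' (smult I T) = st' T \<longleftrightarrow> (\<forall>Q\<in>Mf T st'. \<not> I \<subseteq> Q)"
proof -
  have IT: "ideal_of T (smult I T)" using ideal_smult[OF T I(1)] .
  have I_IT: "I \<subseteq> smult I T" using subset_smult[OF subring_one[OF T]] .
  have "1 \<in> star_f T st' (smult I T) \<longleftrightarrow> (\<forall>Q\<in>Mf T st'. \<not> I \<subseteq> Q)"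
  proof
    assume one: "1 \<in> star_f T st' (smult I T)"
    show "\<forall>Q\<in>Mf T st'. \<not> I \<subseteq> Q"
    proof (intro ballI notI)
      fix Q assume Q: "Q \<in> Mf T st'" "I \<subseteq> Q"
      then have "smult I T \<subseteq> Q" using smult_subset_ideal[OF MfD(3)[OF Q(1)]] by blast
      then show False using Mf_one_notin_star_f[OF T Q(1)] one by blast
    qed
  next
    assume avoid: "\<forall>Q\<in>Mf T st'. \<not> I \<subseteq> Q"
    show "1 \<in> star_f T st' (smult I T)"
    proof (rule ccontr)
      assume "1 \<notin> star_f T st' (smult I T)"
      moreover have "smult I T \<noteq> {0}" using I I_IT by blast
      ultimately obtain Q where "Q \<in> Mf T st'" "smult I T \<subseteq> Q"
        using Mf_supersetE[OF T st' IT] by blast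
      then show False using avoid I_IT by blast
    qed
  qed
  then show ?thesis using star_f_eq_iff_one_mem[OF T st' ideal_ofD(1)[OF IT]] by simp
qed

definition contained_in_localizations :: "'k::field set \<Rightarrow> 'k set \<Rightarrow> ('k set \<Rightarrow> 'k set) \<Rightarrow> bool" where
  "contained_in_localizations D T st' \<longleftrightarrow> (\<forall>Q\<in>Mf T st'. T \<subseteq> loc D (D - (Q \<inter> D)))"

locale semistar_overring =
  fixes D T :: "'k::field set" and st st' :: "'k set \<Rightarrow> 'k set"
  assumes domain: "domain_with_qf D" and overring: "overring D T"
    and semistar_D: "semistar D st" and semistar_T: "semistar T st'"
begin

lemma subring_D: "subring D"
  using domain by (simp add: domain_with_qf_def)

lemma subring_T: "subring T"
  using overring by (simp add: overring_def)

lemma D_subset_T: "D \<subseteq> T"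
  using overring by (simp add: overring_def)

lemma fractionE:
  obtains a b where "a \<in> D" "b \<in> D" "b \<noteq> 0" "z = a / b"
  using domain unfolding domain_with_qf_def by blast

lemma contraction_nonzero:
  assumes Q: "ideal_of T Q" "Q \<noteq> {0}" shows "Q \<inter> D \<noteq> {0}"
proof -
  obtain q where q: "q \<in> Q" "q \<noteq> 0" using Q submod_zero[OF ideal_ofD(2)] by blast
  obtain a b where ab: "a \<in> D" "b \<in> D" "b \<noteq> 0" "q = a / b" by (rule fractionE)
  have "b * q \<in> Q" using submod_scale[OF ideal_ofD(2)[OF Q(1)]] ab(2) D_subset_T q(1) by blast
  moreover have "b * q = a" "a \<noteq> 0" using ab q(2) by auto
  ultimately show ?thesis using ab(1) by blast
qed

lemma prime_contraction:
  assumes Q: "prime_ideal_of T Q" shows "prime_ideal_of D (Q \<inter> D)"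
proof -
  have "ideal_of D (Q \<inter> D)"
    using Q submod_Int[OF submod_subset_ring[OF ideal_ofD(2) D_subset_T] subring_submod[OF subring_D]]
    by (auto simp: ideal_of_def prime_ideal_of_def)
  moreover have "Q \<inter> D \<noteq> D" using one_notin_prime_ideal[OF Q] subring_one[OF subring_D] by blast
  ultimately show ?thesis using Q D_subset_T unfolding prime_ideal_of_def by blast
qed

lemma ideal_colon: "ideal_of D {d \<in> D. d * x \<in> D}"
  unfolding ideal_of_def submod_def
  using subring_zero[OF subring_D] subring_add[OF subring_D] subring_mult[OF subring_D]
  by (auto simp: distrib_right mult.assoc)

lemma colon_nonzeroE:
  obtains b where "b \<in> {d \<in> D. d * x \<in> D}" "b \<noteq> 0"
proof -
  obtain a b where ab: "a \<in> D" "b \<in> D" "b \<noteq> 0" "x = a / b" by (rule fractionE)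
  then have "b \<in> {d \<in> D. d * x \<in> D}" by simp
  then show thesis using that ab(3) by blast
qed

lemma Mf_contractionE:
  assumes L: "linked D T st st'" and Q: "Q \<in> Mf T st'"
  obtains M where "M \<in> Mf D st" "Q \<inter> D \<subseteq> M"
proof -
  have "1 \<notin> star_f D st (Q \<inter> D)"
  proof
    assume "1 \<in> star_f D st (Q \<inter> D)"
    then obtain F where F: "F \<in> ffg D" "F \<subseteq> Q \<inter> D" "1 \<in> st F" by (rule star_f_memE)
    have "st F = st D" using semistar_eq_if_one_mem[OF subring_D semistar_D ffg_Fbar[OF F(1)]] F by blast
    then have "st' (smult F T) = st' T" using L F unfolding linked_def by blast
    then have "1 \<in> st' (smult F T)"
      using semistar_extensive[OF semistar_T subring_Fbar[OF subring_T]] subring_one[OF subring_T] by blast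
    moreover have "smult F T \<subseteq> Q" using smult_subset_ideal[OF MfD(3)[OF Q]] F(2) by blast
    ultimately have "1 \<in> star_f T st' Q"
      using semistar_subset_star_f[OF smult_ffg[OF subring_D subring_T D_subset_T F(1)]] by blast
    then show False using Mf_one_notin_star_f[OF subring_T Q] by blast
  qed
  moreover have "ideal_of D (Q \<inter> D)" "Q \<inter> D \<noteq> {0}"
    using prime_contraction[OF Mf_prime[OF subring_T semistar_T Q]] contraction_nonzero MfD(3,4)[OF Q]
    by (auto simp: prime_ideal_of_def)
  ultimately show thesis using Mf_supersetE[OF subring_D semistar_D] that by blast
qed

lemma extension_eq_iff:
  assumes I: "ideal_of D I" "I \<noteq> {0}"
  shows "star_f T st' (smult I T) = st' T \<longleftrightarrow> (\<forall>Q\<in>Mf T st'. \<not> I \<subseteq> Q)"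
proof -
  obtain x where "x \<in> I" "x \<noteq> 0" using I by (rule ideal_nonzeroE)
  moreover have "I \<subseteq> T" using ideal_ofD(1)[OF I(1)] D_subset_T by blast
  ultimately show ?thesis by (intro star_f_smult_eq_iff[OF subring_T semistar_T])
qed

lemma mem_loc_contraction_iff_colon:
  assumes Q: "Q \<in> Mf T st'"
  shows "x \<in> loc D (D - (Q \<inter> D)) \<longleftrightarrow> \<not> {d \<in> D. d * x \<in> D} \<subseteq> Q"
proof -
  have "0 \<in> Q \<inter> D" using submod_zero[OF ideal_ofD(2)[OF MfD(3)[OF Q]]] subring_zero[OF subring_D] by blast
  then show ?thesis using loc_mem_iff_colon[where P="Q \<inter> D" and D=D and x=x] by blast
qed

lemma star_flat_iff:
  "star_flat D T st st' \<longleftrightarrow> linked D T st st' \<and> contained_in_localizations D T st'"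
proof
  assume flat: "star_flat D T st st'"
  have "T \<subseteq> loc D (D - (Q \<inter> D))" if Q: "Q \<in> Mf T st'" for Q
  proof -
    have "loc D (D - (Q \<inter> D)) = loc T (T - Q)"
      using flat Mf_quasi_prime[OF subring_T semistar_T Q] unfolding star_flat_def by blast
    moreover have "1 \<in> T - Q"
      using subring_one[OF subring_T] one_notin_prime_ideal[OF Mf_prime[OF subring_T semistar_T Q]] by blast
    ultimately show ?thesis using subset_loc[of "T - Q" T] by simp
  qed
  then show "linked D T st st' \<and> contained_in_localizations D T st'"
    using flat by (simp add: star_flat_def contained_in_localizations_def)
next
  assume "linked D T st st' \<and> contained_in_localizations D T st'"
  then have L: "linked D T st st'" and C: "contained_in_localizations D T st'" by auto
  show "star_flat D T st st'"
    unfolding star_flat_def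
  proof (intro conjI allI impI)
    show "linked D T st st'" using L .
    fix Q assume "quasi_prime T (star_f T st') Q"
    then have Qq: "quasi_ideal T (star_f T st') Q" and Qp: "prime_ideal_of T Q"
      by (auto simp: quasi_prime_def)
    have "1 \<notin> star_f T st' Q"
      using one_notin_star_f_if_quasi_ideal[OF subring_T Qq] Qp by (auto simp: prime_ideal_of_def)
    then obtain Q' where Q': "Q' \<in> Mf T st'" "Q \<subseteq> Q'"
      using Mf_supersetE[OF subring_T semistar_T] Qq unfolding quasi_ideal_def by blast
    have "T \<subseteq> loc D (D - (Q' \<inter> D))" using C Q'(1) by (simp add: contained_in_localizations_def)
    also have "\<dots> \<subseteq> loc D (D - (Q \<inter> D))" using Q'(2) by (intro loc_mono) blast
    finally show "loc D (D - (Q \<inter> D)) = loc T (T - Q)"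
      by (rule loc_contraction_eq[OF subring_D D_subset_T Qp])
  qed
qed

lemma contained_iff_prime_extensions:
  "contained_in_localizations D T st' \<longleftrightarrow>
    (\<forall>P. prime_ideal_of D P \<and> P \<noteq> {0} \<longrightarrow> star_f T st' (smult P T) = st' T \<or> T \<subseteq> loc D (D - P))"
proof
  assume C: "contained_in_localizations D T st'"
  show "\<forall>P. prime_ideal_of D P \<and> P \<noteq> {0} \<longrightarrow> star_f T st' (smult P T) = st' T \<or> T \<subseteq> loc D (D - P)"
  proof (intro allI impI)
    fix P assume P: "prime_ideal_of D P \<and> P \<noteq> {0}"
    then have Pi: "ideal_of D P" by (simp add: prime_ideal_of_def)
    show "star_f T st' (smult P T) = st' T \<or> T \<subseteq> loc D (D - P)"
    proof (cases "\<forall>Q\<in>Mf T st'. \<not> P \<subseteq> Q")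
      case True
      then show ?thesis using extension_eq_iff[OF Pi] P by blast
    next
      case False
      then obtain Q where Q: "Q \<in> Mf T st'" "P \<subseteq> Q" by blast
      have "T \<subseteq> loc D (D - (Q \<inter> D))" using C Q(1) by (simp add: contained_in_localizations_def)
      also have "\<dots> \<subseteq> loc D (D - P)" using Q(2) ideal_ofD(1)[OF Pi] by (intro loc_mono) blast
      finally show ?thesis by blast
    qed
  qed
next
  assume H: "\<forall>P. prime_ideal_of D P \<and> P \<noteq> {0} \<longrightarrow> star_f T st' (smult P T) = st' T \<or> T \<subseteq> loc D (D - P)"
  show "contained_in_localizations D T st'"
    unfolding contained_in_localizations_def
  proof
    fix Q assume Q: "Q \<in> Mf T st'"
    have P: "prime_ideal_of D (Q \<inter> D)" "Q \<inter> D \<noteq> {0}"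
      using prime_contraction[OF Mf_prime[OF subring_T semistar_T Q]] contraction_nonzero[OF MfD(3,4)[OF Q]] .
    then have "star_f T st' (smult (Q \<inter> D) T) \<noteq> st' T"
      using extension_eq_iff[of "Q \<inter> D"] Q by (auto simp: prime_ideal_of_def)
    then show "T \<subseteq> loc D (D - (Q \<inter> D))" using H P by blast
  qed
qed

lemma contained_iff_colon_extensions:
  "contained_in_localizations D T st' \<longleftrightarrow>
    (\<forall>x\<in>T. x \<noteq> 0 \<longrightarrow> star_f T st' (smult {d \<in> D. d * x \<in> D} T) = st' T)"
proof -
  have ext: "star_f T st' (smult {d \<in> D. d * x \<in> D} T) = st' T \<longleftrightarrow>
      (\<forall>Q\<in>Mf T st'. x \<in> loc D (D - (Q \<inter> D)))" for x
  proof -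
    obtain b where "b \<in> {d \<in> D. d * x \<in> D}" "b \<noteq> 0" by (rule colon_nonzeroE)
    then have "{d \<in> D. d * x \<in> D} \<noteq> {0}" by blast
    then show ?thesis using extension_eq_iff[OF ideal_colon] mem_loc_contraction_iff_colon by blast
  qed
  have zero: "0 \<in> loc D (D - (Q \<inter> D))" if "Q \<in> Mf T st'" for Q
    using mem_loc_contraction_iff_colon[OF that, of 0] subring_zero[OF subring_D] subring_one[OF subring_D]
      one_notin_prime_ideal[OF Mf_prime[OF subring_T semistar_T that]] by auto
  show ?thesis
    unfolding contained_in_localizations_def ext
  proof (intro iffI ballI impI subsetI)
    fix x Q assume "\<forall>Q\<in>Mf T st'. T \<subseteq> loc D (D - (Q \<inter> D))" "x \<in> T" "Q \<in> Mf T st'"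
    then show "x \<in> loc D (D - (Q \<inter> D))" by blast
  next
    fix Q x assume H: "\<forall>x\<in>T. x \<noteq> 0 \<longrightarrow> (\<forall>Q\<in>Mf T st'. x \<in> loc D (D - (Q \<inter> D)))"
      and Q: "Q \<in> Mf T st'" and x: "x \<in> T"
    show "x \<in> loc D (D - (Q \<inter> D))" using H Q x zero[OF Q] by (cases "x = 0") auto
  qed
qed

lemma contained_iff_tilde_eq:
  "contained_in_localizations D T st' \<longleftrightarrow>
    tilde T st' T = \<Inter>{loc D (D - (Q \<inter> D)) | Q. Q \<in> Mf T st'}"
proof
  assume C: "contained_in_localizations D T st'"
  have "loc T (T - Q) = loc D (D - (Q \<inter> D))" if "Q \<in> Mf T st'" for Q
    using loc_contraction_eq[OF subring_D D_subset_T Mf_prime[OF subring_T semistar_T that]] C that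
    unfolding contained_in_localizations_def by auto
  then show "tilde T st' T = \<Inter>{loc D (D - (Q \<inter> D)) | Q. Q \<in> Mf T st'}"
    unfolding tilde_ring_eq[OF subring_T semistar_T] by (metis (mono_tags, lifting))
next
  assume "tilde T st' T = \<Inter>{loc D (D - (Q \<inter> D)) | Q. Q \<in> Mf T st'}"
  then show "contained_in_localizations D T st'"
    unfolding contained_in_localizations_def using subset_tilde[OF subring_T, of T st'] by blast
qed

lemma mem_loc_contraction_if_scaled_tilde:
  assumes L: "linked D T st st'" and Q: "Q \<in> Mf T st'" and I: "I \<subseteq> D" "\<not> I \<subseteq> Q"
    and z: "(*) z ` tilde D st I \<subseteq> tilde D st D"
  shows "z \<in> loc D (D - (Q \<inter> D))"
proof -
  obtain i where i: "i \<in> I" "i \<notin> Q" using I(2) by blast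
  obtain M where M: "M \<in> Mf D st" "Q \<inter> D \<subseteq> M" using L Q by (rule Mf_contractionE)
  have "z * i \<in> tilde D st D" using z subset_tilde[OF subring_D, of I st] i(1) by blast
  also have "\<dots> \<subseteq> loc D (D - M)" using tilde_ring_eq[OF subring_D semistar_D] M(1) by blast
  finally obtain a s where as: "a \<in> D" "s \<in> D - M" "z * i = a / s" by (rule locE)
  have iD: "i \<in> D" using i(1) I(1) by blast
  have "s \<notin> Q" using as(2) M(2) by blast
  then have "s * i \<notin> Q"
    using prime_ideal_mult_notin[OF Mf_prime[OF subring_T semistar_T Q]] i(2) as(2) iD D_subset_T by blast
  moreover have "s * i \<in> D" using as(2) iD subring_mult[OF subring_D] by blast
  moreover have "0 \<in> Q" using submod_zero[OF ideal_ofD(2)[OF MfD(3)[OF Q]]] .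
  then have "s \<noteq> 0" "i \<noteq> 0" using \<open>s \<notin> Q\<close> i(2) by auto
  then have "z = a / (s * i)" using as(3) by (simp add: field_simps)
  ultimately show ?thesis using as(1) by (intro locI[of a D "s * i"]) auto
qed

lemma contained_if_gen_loc:
  assumes L: "linked D T st st'" and \<Sigma>: "mult_system D \<Sigma>"
    and eq: "tilde T st' T = gen_loc D st \<Sigma>" and ext: "\<forall>I\<in>\<Sigma>. star_f T st' (smult I T) = st' T"
  shows "contained_in_localizations D T st'"
  unfolding contained_in_localizations_def
proof (intro ballI subsetI)
  fix Q t assume Q: "Q \<in> Mf T st'" and t: "t \<in> T"
  then have "t \<in> gen_loc D st \<Sigma>" using subset_tilde[OF subring_T, of T st'] eq by blast
  then obtain I where I: "I \<in> \<Sigma>" "(*) t ` tilde D st I \<subseteq> tilde D st D" unfolding gen_loc_def by blast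
  have Ii: "ideal_of D I" "I \<noteq> {0}" using \<Sigma> I(1) unfolding mult_system_def by auto
  then have "\<not> I \<subseteq> Q" using ext I(1) extension_eq_iff Q by blast
  then show "t \<in> loc D (D - (Q \<inter> D))"
    using mem_loc_contraction_if_scaled_tilde[OF L Q ideal_ofD(1)[OF Ii(1)] _ I(2)] by blast
qed

lemma mult_system_avoiding_Mf:
  "mult_system D {I. ideal_of D I \<and> I \<noteq> {0} \<and> (\<forall>Q\<in>Mf T st'. \<not> I \<subseteq> Q)}"
  (is "mult_system D ?\<Sigma>")
  unfolding mult_system_def
proof (intro conjI ballI)
  have "\<not> D \<subseteq> Q" if "Q \<in> Mf T st'" for Q
    using subring_one[OF subring_D] one_notin_prime_ideal[OF Mf_prime[OF subring_T semistar_T that]] by blast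
  moreover have "ideal_of D D" "D \<noteq> {0}"
    using subring_submod[OF subring_D] subring_one[OF subring_D] by (auto simp: ideal_of_def)
  ultimately have "D \<in> ?\<Sigma>" by blast
  then show "?\<Sigma> \<noteq> {}" by blast
next
  fix I assume "I \<in> ?\<Sigma>"
  then show "ideal_of D I" "I \<noteq> {0}" by auto
next
  fix I J assume "I \<in> ?\<Sigma>" "J \<in> ?\<Sigma>"
  then have I: "ideal_of D I" "I \<noteq> {0}" "\<forall>Q\<in>Mf T st'. \<not> I \<subseteq> Q"
    and J: "ideal_of D J" "J \<noteq> {0}" "\<forall>Q\<in>Mf T st'. \<not> J \<subseteq> Q" by auto
  obtain i where i: "i \<in> I" "i \<noteq> 0" using I(1,2) by (rule ideal_nonzeroE)
  obtain j where j: "j \<in> J" "j \<noteq> 0" using J(1,2) by (rule ideal_nonzeroE)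
  have "i * j \<in> smult I J" "i * j \<noteq> 0" using mult_mem_smult[OF i(1) j(1)] i(2) j(2) by simp_all
  then have "smult I J \<noteq> {0}" by blast
  moreover have "\<not> smult I J \<subseteq> Q" if Q: "Q \<in> Mf T st'" for Q
  proof
    assume IJ: "smult I J \<subseteq> Q"
    have "I \<subseteq> T" "J \<subseteq> T" using ideal_ofD(1)[OF I(1)] ideal_ofD(1)[OF J(1)] D_subset_T by blast+
    then have "I \<subseteq> Q \<or> J \<subseteq> Q"
      using prime_ideal_smult_subset[OF Mf_prime[OF subring_T semistar_T Q] _ _ IJ] by blast
    then show False using I(3) J(3) Q by blast
  qed
  moreover have "ideal_of D (smult I J)" using ideal_smult_ideals[OF subring_D I(1) J(1)] .
  ultimately show "smult I J \<in> ?\<Sigma>" by blast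
qed

lemma tilde_eq_gen_loc_avoiding_Mf:
  assumes L: "linked D T st st'" and C: "contained_in_localizations D T st'"
  shows "tilde T st' T = gen_loc D st {I. ideal_of D I \<and> I \<noteq> {0} \<and> (\<forall>Q\<in>Mf T st'. \<not> I \<subseteq> Q)}"
    (is "_ = gen_loc D st ?\<Sigma>")
proof
  have tilde_eq: "tilde T st' T = \<Inter>{loc D (D - (Q \<inter> D)) | Q. Q \<in> Mf T st'}"
    using C contained_iff_tilde_eq by blast
  show "gen_loc D st ?\<Sigma> \<subseteq> tilde T st' T"
  proof
    fix z assume "z \<in> gen_loc D st ?\<Sigma>"
    then obtain I where I: "I \<in> ?\<Sigma>" "(*) z ` tilde D st I \<subseteq> tilde D st D"
      unfolding gen_loc_def by blast
    then have "I \<subseteq> D" "\<forall>Q\<in>Mf T st'. \<not> I \<subseteq> Q" using ideal_ofD(1)[of D I] by auto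
    then have "z \<in> loc D (D - (Q \<inter> D))" if "Q \<in> Mf T st'" for Q
      using mem_loc_contraction_if_scaled_tilde[OF L that _ _ I(2)] that by blast
    then show "z \<in> tilde T st' T" unfolding tilde_eq by blast
  qed
  show "tilde T st' T \<subseteq> gen_loc D st ?\<Sigma>"
  proof
    fix z assume "z \<in> tilde T st' T"
    then have "\<forall>Q\<in>Mf T st'. \<not> {d \<in> D. d * z \<in> D} \<subseteq> Q"
      unfolding tilde_eq using mem_loc_contraction_iff_colon by blast
    moreover obtain b where "b \<in> {d \<in> D. d * z \<in> D}" "b \<noteq> 0" by (rule colon_nonzeroE)
    ultimately have "{d \<in> D. d * z \<in> D} \<in> ?\<Sigma>" using ideal_colon[of z] by auto
    moreover have "(*) z ` tilde D st {d \<in> D. d * z \<in> D} \<subseteq> tilde D st D"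
      by (rule tilde_scale) (simp add: mult.commute)
    ultimately show "z \<in> gen_loc D st ?\<Sigma>" unfolding gen_loc_def by blast
  qed
qed

lemma exists_gen_loc_if_contained:
  assumes L: "linked D T st st'" and C: "contained_in_localizations D T st'"
  shows "\<exists>\<Sigma>. mult_system D \<Sigma> \<and> tilde T st' T = gen_loc D st \<Sigma> \<and>
    (\<forall>I\<in>\<Sigma>. star_f T st' (smult I T) = st' T)"
proof (intro exI conjI)
  let ?\<Sigma> = "{I. ideal_of D I \<and> I \<noteq> {0} \<and> (\<forall>Q\<in>Mf T st'. \<not> I \<subseteq> Q)}"
  show "mult_system D ?\<Sigma>" by (rule mult_system_avoiding_Mf)
  show "tilde T st' T = gen_loc D st ?\<Sigma>" using tilde_eq_gen_loc_avoiding_Mf[OF L C] .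
  show "\<forall>I\<in>?\<Sigma>. star_f T st' (smult I T) = st' T"
  proof
    fix I assume "I \<in> ?\<Sigma>"
    then have "ideal_of D I" "I \<noteq> {0}" "\<forall>Q\<in>Mf T st'. \<not> I \<subseteq> Q" by auto
    then show "star_f T st' (smult I T) = st' T" using extension_eq_iff by blast
  qed
qed

lemma contained_if_flat:
  assumes L: "linked D T st st'"
    and flat: "\<forall>P. quasi_prime D (star_f D st) P \<longrightarrow> flat_over (loc D (D - P)) (loc T (D - P))"
  shows "contained_in_localizations D T st'"
  unfolding contained_in_localizations_def
proof (intro ballI subsetI)
  fix Q t assume Q: "Q \<in> Mf T st'" and t: "t \<in> T"
  have Qp: "prime_ideal_of T Q" using Mf_prime[OF subring_T semistar_T Q] .
  obtain M where M: "M \<in> Mf D st" "Q \<inter> D \<subseteq> M" using L Q by (rule Mf_contractionE)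
  let ?S = "D - M"
  have S: "mult_closed ?S" using mult_closed_prime_compl[OF subring_D Mf_prime[OF subring_D semistar_D M(1)]] .
  have ST: "?S \<subseteq> T" and SQ: "?S \<inter> Q = {}" using D_subset_T M(2) by blast+
  have fl: "flat_over (loc D ?S) (loc T ?S)" using flat Mf_quasi_prime[OF subring_D semistar_D M(1)] by blast
  obtain x y where xy: "x \<in> D" "y \<in> D" "y \<noteq> 0" "t = x / y" by (rule fractionE)
  have "D \<subseteq> loc D ?S" "T \<subseteq> loc T ?S" using S by (simp_all add: subset_loc mult_closed_def)
  then have coeffs: "y \<in> loc D ?S" "- x \<in> loc D ?S" and elems: "t \<in> loc T ?S" "1 \<in> loc T ?S"
    using xy(1,2) subring_uminus[OF subring_D] t subring_one[OF subring_T] by auto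
  \<comment> \<open>Flatness applied to y t - x 1 = 0: some coefficient of 1 avoids the extension of Q.\<close>
  have "y * t + (- x) * 1 = 0" using xy(3,4) by simp
  then obtain k :: nat and b0 b1 v
    where bv: "\<forall>j<k. v j \<in> loc T ?S \<and> b0 j \<in> loc D ?S \<and> b1 j \<in> loc D ?S \<and> y * b0 j + (- x) * b1 j = 0"
      and "t = (\<Sum>j<k. b0 j * v j)" and one: "1 = (\<Sum>j<k. b1 j * v j)"
    by (rule flat_over_two_term_relationE[OF fl coeffs elems])
  have "\<forall>j<k. v j \<in> loc T ?S" using bv by blast
  then obtain j where j: "j < k" "b1 j \<notin> loc Q ?S"
    using coeff_notin_loc_idealE[OF subring_T MfD(3)[OF Q] ST S SQ _ one] by blast
  have "t * b1 j = b0 j" using bv j(1) xy(3,4) by (auto simp: field_simps)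
  moreover have "b0 j \<in> loc D ?S" "b1 j \<in> loc D ?S" using bv j(1) by auto
  moreover have "?S \<subseteq> D - Q" "0 \<notin> ?S" using SQ S by (auto simp: mult_closed_def)
  ultimately show "t \<in> loc D (D - (Q \<inter> D))"
    using mem_loc_contraction_if_scaled_mem[OF subring_D D_subset_T Qp _ _ _ j(2)] by simp
qed

end

theorem proposition4p4:
  fixes D T :: "'k::field set" and st st' :: "'k set \<Rightarrow> 'k set"
  assumes "domain_with_qf D" and "overring D T"
    and "semistar D st" and "semistar T st'"
  defines "c1 \<equiv> star_flat D T st st'"
    and "c2 \<equiv> linked D T st st' \<and>
       (\<forall>P. prime_ideal_of D P \<and> P \<noteq> {0} \<longrightarrow>
          star_f T st' (smult P T) = st' T \<or> T \<subseteq> loc D (D - P))"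
    and "c3 \<equiv> linked D T st st' \<and>
       (\<forall>x\<in>T. x \<noteq> 0 \<longrightarrow> star_f T st' (smult {d \<in> D. d * x \<in> D} T) = st' T)"
    and "c4 \<equiv> linked D T st st' \<and>
       tilde T st' T = \<Inter>{loc D (D - (Q \<inter> D)) | Q. Q \<in> Mf T st'}"
    and "c5 \<equiv> linked D T st st' \<and>
       (\<exists>\<Sigma>. mult_system D \<Sigma> \<and> tilde T st' T = gen_loc D st \<Sigma> \<and>
          (\<forall>I\<in>\<Sigma>. star_f T st' (smult I T) = st' T))"
    and "c6 \<equiv> linked D T st st' \<and>
       (\<forall>P. quasi_prime D (star_f D st) P \<longrightarrow> flat_over (loc D (D - P)) (loc T (D - P)))"
  shows "(c1 \<longleftrightarrow> c2) \<and> (c1 \<longleftrightarrow> c3) \<and> (c1 \<longleftrightarrow> c4) \<and> (c1 \<longleftrightarrow> c5) \<and> (c6 \<longrightarrow> c1)"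
proof -
  interpret semistar_overring D T st st' using assms(1-4) by unfold_locales
  let ?C = "linked D T st st' \<and> contained_in_localizations D T st'"
  have "c1 \<longleftrightarrow> ?C" unfolding c1_def by (rule star_flat_iff)
  moreover have "c2 \<longleftrightarrow> ?C" unfolding c2_def using contained_iff_prime_extensions by blast
  moreover have "c3 \<longleftrightarrow> ?C" unfolding c3_def using contained_iff_colon_extensions by blast
  moreover have "c4 \<longleftrightarrow> ?C" unfolding c4_def using contained_iff_tilde_eq by blast
  moreover have "c5 \<longleftrightarrow> ?C"
    unfolding c5_def using contained_if_gen_loc exists_gen_loc_if_contained by blast
  moreover have "c6 \<longrightarrow> ?C" unfolding c6_def using contained_if_flat by blast
  ultimately show ?thesis by blast
qed

end
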